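(* Let $\ell\le L_1$ be positive integers and $L\ge2$. For every $(p,n,L_1)$-multi-labelling $\mathcal M$ of an $L$-graph, $\Delta(\mathcal M)\ge0$.
   Context: An $L$-graph is a single cycle with $2L$ vertices and $2L$ edges whose vertices alternate between "$n$-vertices" and "$p$-vertices" (so there are $L$ of each). A $(p,n,L_1)$-multi-labelling assigns to each $n$-vertex an $n$-label in $[n]$ and to the $r$-th $p$-vertex ($r=1,\dots,L$) a tuple of $d_r$ $p$-labels in $[p]$, such that: (i) the $n$-label of each $n$-vertex differs from the $n$-labels of the two $n$-vertices immediately preceding and following it in the cycle; (ii) $\ell\le d_r\le L_1$ and the $d_r$ $p$-labels of each tuple are distinct; (iii) for each $n$-label $i$ and $p$-label $j$, the number of edges of the cycle whose $n$-vertex endpoint has label $i$ and whose $p$-vertex endpoint has $j$ in its tuple is either $0$ or at least $2$. Let $r(\mathcal M)$ be the number of distinct $n$-labels and $c(\mathcal M)$ the number of distinct $p$-labels (elements of $[p]$) used. The excess is $\Delta(\mathcal M)=1+\frac L2+\sum_{r=1}^L\frac{d_r}{2\ell}-r(\mathcal M)-\frac{c(\mathcal M)}{\ell}$. *)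

theory Defs
  imports Main Complex_Main
begin

text \<open>An L-graph: the cycle n_0, p_0, n_1, p_1, ..., n_(L-1), p_(L-1), n_0.
  n-vertices and p-vertices are both indexed by r < L (0-based).
  Its 2L edges are (n_r, p_r) and (p_r, n_((r+1) mod L)) for r < L.
  A multi-labelling is given by nl :: nat => nat (n-label of n_r) and
  pl :: nat => nat list (the tuple of p-labels of p_r; d_r = length (pl r)).\<close>

definition edge_count :: "nat \<Rightarrow> (nat \<Rightarrow> nat) \<Rightarrow> (nat \<Rightarrow> nat list) \<Rightarrow> nat \<Rightarrow> nat \<Rightarrow> nat" where
  "edge_count L nl pl i j =
     card {r. r < L \<and> nl r = i \<and> j \<in> set (pl r)}
   + card {r. r < L \<and> nl (Suc r mod L) = i \<and> j \<in> set (pl r)}"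

definition multi_labelling ::
  "nat \<Rightarrow> nat \<Rightarrow> nat \<Rightarrow> nat \<Rightarrow> nat \<Rightarrow> (nat \<Rightarrow> nat) \<Rightarrow> (nat \<Rightarrow> nat list) \<Rightarrow> bool" where
  "multi_labelling p n L1 ell L nl pl \<longleftrightarrow>
     (\<forall>r<L. nl r \<in> {1..n}) \<and>
     (\<forall>r<L. set (pl r) \<subseteq> {1..p}) \<and>
     (\<forall>r<L. nl r \<noteq> nl (Suc r mod L) \<and> nl r \<noteq> nl ((r + L - 1) mod L)) \<and>
     (\<forall>r<L. ell \<le> length (pl r) \<and> length (pl r) \<le> L1 \<and> distinct (pl r)) \<and>
     (\<forall>i j. edge_count L nl pl i j = 0 \<or> edge_count L nl pl i j \<ge> 2)"

definition num_nlabels :: "nat \<Rightarrow> (nat \<Rightarrow> nat) \<Rightarrow> nat" where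
  "num_nlabels L nl = card (nl ` {..<L})"

definition num_plabels :: "nat \<Rightarrow> (nat \<Rightarrow> nat list) \<Rightarrow> nat" where
  "num_plabels L pl = card (\<Union>r<L. set (pl r))"

definition excess :: "nat \<Rightarrow> nat \<Rightarrow> (nat \<Rightarrow> nat) \<Rightarrow> (nat \<Rightarrow> nat list) \<Rightarrow> real" where
  "excess ell L nl pl =
     1 + real L / 2 + (\<Sum>r<L. real (length (pl r)) / (2 * real ell))
     - real (num_nlabels L nl) - real (num_plabels L pl) / real ell"

end

theory Submission
  imports Defs
begin

text \<open>The steps of the closed walk n_0, n_1, ..., n_(L-1) of n-labels that reach a label not
  seen before form a spanning tree of the r(M) labels used, so there are r(M) - 1 tree steps and
  L - r(M) + 1 chords. For a p-label j, the steps whose tuple contains j form an edge set without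
  vertices of degree one (condition (iii)). Such a set cannot lie inside the tree, so it contains
  a chord; and if it contains exactly one chord e, it also contains the tree step by which the
  later discovered endpoint of e was first reached. Counting pairs (step, p-label) with these two
  facts gives ell (r(M) - 1) + 2 c(M) \<le> sum_r d_r + ell (L - r(M) + 1), i.e. 2 ell Delta(M) \<ge> 0.\<close>

lemma sum_card_eq_sum_card_occurrences:
  assumes "finite C" and "\<And>e. e \<in> C \<Longrightarrow> finite (A e)"
  shows "(\<Sum>e\<in>C. card (A e)) = (\<Sum>j\<in>(\<Union>e\<in>C. A e). card {e\<in>C. j \<in> A e})"
proof -
  have "(\<Sum>e\<in>C. card (A e)) = (\<Sum>e\<in>C. card {j\<in>(\<Union>e\<in>C. A e). j \<in> A e})"
    by (intro sum.cong arg_cong[where f = card]) auto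
  also have "\<dots> = (\<Sum>j\<in>(\<Union>e\<in>C. A e). card {e\<in>C. j \<in> A e})"
    using assms by (intro sum_multicount_gen) auto
  finally show ?thesis .
qed

text \<open>T and C stand for the tree steps and the chords, A e for the p-labels of step e. A label
  on two or more chords is paid for by the chords alone; a label on a single chord e is charged to
  the tree step \<phi> e, and the tree steps outside \<phi> ` C carry at least ell labels each.\<close>

lemma card_labels_bound_by_chords:
  fixes T C :: "'e set" and A :: "'e \<Rightarrow> 'j set" and \<phi> :: "'e \<Rightarrow> 'e"
  assumes fin: "finite T" "finite C" "\<And>e. e \<in> T \<union> C \<Longrightarrow> finite (A e)"
    and disj: "T \<inter> C = {}"
    and tree_size: "\<And>f. f \<in> T \<Longrightarrow> ell \<le> card (A f)"
    and \<phi>: "\<phi> ` C \<subseteq> T"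
    and on_chord: "\<And>j. j \<in> (\<Union>e\<in>T \<union> C. A e) \<Longrightarrow> \<exists>e\<in>C. j \<in> A e"
    and single_chord: "\<And>e j. e \<in> C \<Longrightarrow> {e'\<in>C. j \<in> A e'} = {e} \<Longrightarrow> j \<in> A (\<phi> e)"
  shows "ell * card T + 2 * card (\<Union>e\<in>T \<union> C. A e) \<le> (\<Sum>e\<in>T \<union> C. card (A e)) + ell * card C"
proof -
  define P where "P = (\<Union>e\<in>T \<union> C. A e)"
  define Q where "Q = {j\<in>P. card {e\<in>C. j \<in> A e} = 1}"
  have finP: "finite P"
    using fin unfolding P_def by blast
  have "2 * card P \<le> (\<Sum>j\<in>P. card {e\<in>C. j \<in> A e} + (if j \<in> Q then 1 else 0))"
  proof -
    have "2 \<le> card {e\<in>C. j \<in> A e} + (if j \<in> Q then 1 else 0)" if "j \<in> P" for j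
    proof -
      have "{e\<in>C. j \<in> A e} \<noteq> {}"
        using on_chord that unfolding P_def by blast
      then have "card {e\<in>C. j \<in> A e} \<noteq> 0"
        using fin(2) by simp
      then show ?thesis
        using that unfolding Q_def by auto
    qed
    then have "(\<Sum>j\<in>P. 2) \<le> (\<Sum>j\<in>P. card {e\<in>C. j \<in> A e} + (if j \<in> Q then 1 else 0))"
      by (rule sum_mono)
    then show ?thesis
      by (simp add: mult.commute)
  qed
  also have "\<dots> = (\<Sum>e\<in>C. card (A e)) + card Q"
  proof -
    have "(\<Sum>j\<in>P. card {e\<in>C. j \<in> A e}) = (\<Sum>j\<in>(\<Union>e\<in>C. A e). card {e\<in>C. j \<in> A e})"
      unfolding P_def by (rule sum.mono_neutral_right) (use fin in auto)
    also have "\<dots> = (\<Sum>e\<in>C. card (A e))"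
      using fin by (intro sum_card_eq_sum_card_occurrences[symmetric]) auto
    finally have "(\<Sum>j\<in>P. card {e\<in>C. j \<in> A e}) = (\<Sum>e\<in>C. card (A e))" .
    moreover have "Q \<subseteq> P"
      unfolding Q_def by blast
    then have "(\<Sum>j\<in>P. if j \<in> Q then 1 else 0) = card Q"
      using finP by (simp add: sum.If_cases Int_absorb1)
    ultimately show ?thesis
      by (simp add: sum.distrib)
  qed
  finally have chords: "2 * card P \<le> (\<Sum>e\<in>C. card (A e)) + card Q" .
  have Q_covered: "Q \<subseteq> (\<Union>f\<in>\<phi> ` C. A f)"
  proof
    fix j assume "j \<in> Q"
    then obtain e where "{e'\<in>C. j \<in> A e'} = {e}"
      unfolding Q_def by (auto simp: card_1_singleton_iff)
    then show "j \<in> (\<Union>f\<in>\<phi> ` C. A f)"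
      using single_chord by blast
  qed
  have fin_\<phi>C: "finite (\<phi> ` C)" "\<And>f. f \<in> \<phi> ` C \<Longrightarrow> finite (A f)"
    using fin \<phi> by auto
  have "card Q \<le> card (\<Union>f\<in>\<phi> ` C. A f)"
    using Q_covered fin_\<phi>C by (intro card_mono finite_UN_I)
  also have "\<dots> \<le> (\<Sum>f\<in>\<phi> ` C. card (A f))"
    using fin_\<phi>C(1) by (rule card_UN_le)
  finally have singles: "card Q \<le> (\<Sum>f\<in>\<phi> ` C. card (A f))" .
  have "card T = card (T - \<phi> ` C) + card (\<phi> ` C)"
    using card_Diff_subset[OF fin_\<phi>C(1) \<phi>] card_mono[OF fin(1) \<phi>] by linarith
  then have "ell * card T = ell * card (T - \<phi> ` C) + ell * card (\<phi> ` C)"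
    by (simp add: add_mult_distrib2)
  also have "\<dots> \<le> (\<Sum>f\<in>T - \<phi> ` C. card (A f)) + ell * card C"
  proof (rule add_mono)
    show "ell * card (T - \<phi> ` C) \<le> (\<Sum>f\<in>T - \<phi> ` C. card (A f))"
      using tree_size sum_mono[of "T - \<phi> ` C" "\<lambda>_. ell"] by (simp add: mult.commute)
    show "ell * card (\<phi> ` C) \<le> ell * card C"
      using card_image_le[OF fin(2)] by (rule mult_le_mono2)
  qed
  finally have tree: "ell * card T \<le> (\<Sum>f\<in>T - \<phi> ` C. card (A f)) + ell * card C" .
  have "(\<Sum>e\<in>T \<union> C. card (A e)) = (\<Sum>f\<in>T. card (A f)) + (\<Sum>e\<in>C. card (A e))"
    using fin disj by (intro sum.union_disjoint) auto
  also have "(\<Sum>f\<in>T. card (A f)) = (\<Sum>f\<in>T - \<phi> ` C. card (A f)) + (\<Sum>f\<in>\<phi> ` C. card (A f))"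
    using \<phi> fin(1) by (rule sum.subset_diff)
  finally have "(\<Sum>e\<in>T \<union> C. card (A e))
      = (\<Sum>f\<in>T - \<phi> ` C. card (A f)) + (\<Sum>f\<in>\<phi> ` C. card (A f)) + (\<Sum>e\<in>C. card (A e))" .
  with chords singles tree show ?thesis
    unfolding P_def by linarith
qed

lemma card_visited_prefix:
  "card (w ` {..<Suc k}) = Suc (card {s. s < k \<and> w (Suc s) \<notin> w ` {..s}})"
proof (induction k)
  case 0
  then show ?case by (simp add: lessThan_Suc)
next
  case (Suc k)
  have visited: "w ` {..<Suc (Suc k)} = insert (w (Suc k)) (w ` {..k})"
    by (simp add: lessThan_Suc_atMost atMost_Suc)
  show ?case
  proof (cases "w (Suc k) \<in> w ` {..k}")
    case True
    then have "{s. s < Suc k \<and> w (Suc s) \<notin> w ` {..s}} = {s. s < k \<and> w (Suc s) \<notin> w ` {..s}}"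
      using less_Suc_eq by auto
    with Suc True visited show ?thesis
      by (simp add: insert_absorb lessThan_Suc_atMost)
  next
    case False
    then have "{s. s < Suc k \<and> w (Suc s) \<notin> w ` {..s}} = insert k {s. s < k \<and> w (Suc s) \<notin> w ` {..s}}"
      using less_Suc_eq by auto
    with Suc False visited show ?thesis
      by (simp add: lessThan_Suc_atMost)
  qed
qed

text \<open>Step r < L of the walk joins w r to w (Suc r mod L); in the application w is the
  n-labelling and step r is the p-vertex p_r.\<close>

locale loopless_closed_walk =
  fixes L :: nat and w :: "nat \<Rightarrow> 'a"
  assumes no_loop: "r < L \<Longrightarrow> w r \<noteq> w (Suc r mod L)"
begin

definition degree_in :: "nat set \<Rightarrow> 'a \<Rightarrow> nat" where
  "degree_in E x = card {r\<in>E. w r = x} + card {r\<in>E. w (Suc r mod L) = x}"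

definition leafless :: "nat set \<Rightarrow> bool" where
  "leafless E \<longleftrightarrow> (\<forall>x. degree_in E x \<noteq> 1)"

text \<open>The discovery steps are the edges of a spanning tree of the visited vertices; all other
  steps are chords.\<close>

definition discovery_steps :: "nat set" where
  "discovery_steps = {s. Suc s < L \<and> w (Suc s) \<notin> w ` {..s}}"

definition first_visit :: "'a \<Rightarrow> nat" where
  "first_visit x = (LEAST t. w t = x)"

text \<open>The tree step through which the later discovered endpoint of e was first reached. The
  subtraction is harmless: the endpoints differ, so the later first visit is positive.\<close>

definition discovery_edge :: "nat \<Rightarrow> nat" where
  "discovery_edge e = max (first_visit (w e)) (first_visit (w (Suc e mod L))) - 1"

lemma card_visited: "0 < L \<Longrightarrow> card (w ` {..<L}) = Suc (card discovery_steps)"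
  using card_visited_prefix[of w "L - 1"] unfolding discovery_steps_def
  by (simp add: less_diff_conv)

lemma discovery_steps_subset: "discovery_steps \<subseteq> {..<L}"
  unfolding discovery_steps_def by auto

lemma first_visit_le: "w t = x \<Longrightarrow> first_visit x \<le> t"
  unfolding first_visit_def by (rule Least_le)

lemma first_visit_visits: "w (first_visit (w t)) = w t"
  unfolding first_visit_def by (rule LeastI) (rule refl)

lemma first_visit_fresh: "w (first_visit (w t)) \<notin> w ` {..<first_visit (w t)}"
proof
  assume "w (first_visit (w t)) \<in> w ` {..<first_visit (w t)}"
  then obtain t' where "t' < first_visit (w t)" and "w t' = w t"
    using first_visit_visits by auto
  then show False
    unfolding first_visit_def using not_less_Least by blast
qed

lemma first_visit_discovered: "w (Suc s) \<notin> w ` {..s} \<Longrightarrow> first_visit (w (Suc s)) = Suc s"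
  using first_visit_le[of "Suc s"] first_visit_visits[of "Suc s"]
  by (metis atMost_iff image_eqI le_SucE)

lemma discovery_edge_in_discovery_steps:
  assumes "e < L"
  shows "discovery_edge e \<in> discovery_steps"
proof -
  define t where "t = max (first_visit (w e)) (first_visit (w (Suc e mod L)))"
  obtain u where t_eq: "t = first_visit (w u)"
    unfolding t_def by (metis max_def)
  have "first_visit (w e) \<noteq> first_visit (w (Suc e mod L))"
    using no_loop[OF assms] first_visit_visits by metis
  then have "0 < t"
    unfolding t_def by linarith
  moreover have "Suc e mod L < L"
    using assms by simp
  then have "t < L"
    using first_visit_le[OF refl, of e] first_visit_le[OF refl, of "Suc e mod L"] assms
    unfolding t_def by linarith
  moreover have "w t \<notin> w ` {..<t}"
    using first_visit_fresh[of u] t_eq by simp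
  ultimately show ?thesis
    unfolding discovery_steps_def discovery_edge_def t_def[symmetric]
    by (simp add: lessThan_Suc_atMost[symmetric])
qed

lemma leafless_shared_endpoint:
  assumes "leafless E" and "e \<in> E" and "e < L" and "x = w e \<or> x = w (Suc e mod L)"
  shows "\<exists>r\<in>E. r \<noteq> e \<and> (w r = x \<or> w (Suc r mod L) = x)"
proof (rule ccontr)
  assume "\<not> ?thesis"
  then have only_e: "\<And>r. r \<in> E \<Longrightarrow> w r = x \<or> w (Suc r mod L) = x \<Longrightarrow> r = e"
    by blast
  have "degree_in E x = 1"
  proof (cases "w e = x")
    case True
    then have starts: "{r\<in>E. w r = x} = {e}"
      using only_e assms(2) by blast
    have ends: "{r\<in>E. w (Suc r mod L) = x} = {}"
      using only_e True no_loop[OF assms(3)] by blast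
    show ?thesis
      unfolding degree_in_def starts ends by simp
  next
    case False
    then have "w (Suc e mod L) = x"
      using assms(4) by blast
    then have ends: "{r\<in>E. w (Suc r mod L) = x} = {e}"
      using only_e assms(2) by blast
    have starts: "{r\<in>E. w r = x} = {}"
      using only_e False by blast
    show ?thesis
      unfolding degree_in_def starts ends by simp
  qed
  then show False
    using assms(1) unfolding leafless_def by blast
qed

text \<open>The last discovery step s in E reaches a vertex that no earlier step touches, so the
  other step of E at that vertex is a chord.\<close>

lemma max_discovery_step_meets_chord:
  assumes E: "E \<subseteq> {..<L}" "leafless E" and "E \<inter> discovery_steps \<noteq> {}"
  defines "s \<equiv> Max (E \<inter> discovery_steps)"
  shows "\<exists>e\<in>E - discovery_steps. w e = w (Suc s) \<or> w (Suc e mod L) = w (Suc s)"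
proof -
  have fin: "finite (E \<inter> discovery_steps)"
    using E(1) finite_subset by blast
  have s: "s \<in> E" "s \<in> discovery_steps"
    using Max_in[OF fin assms(3)] unfolding s_def by auto
  then have fresh: "w (Suc s) \<notin> w ` {..s}" and s_mod: "Suc s mod L = Suc s"
    unfolding discovery_steps_def by auto
  obtain r where r: "r \<in> E" "r \<noteq> s" "w r = w (Suc s) \<or> w (Suc r mod L) = w (Suc s)"
    using leafless_shared_endpoint[OF E(2) s(1)] E(1) s(1) s_mod by auto
  have "r \<notin> discovery_steps"
  proof
    assume r_disc: "r \<in> discovery_steps"
    then have "r < s"
      using Max_ge[OF fin] r(1,2) unfolding s_def by fastforce
    moreover have "Suc r mod L = Suc r"
      using r_disc unfolding discovery_steps_def by auto
    ultimately have "w r \<in> w ` {..s}" and "w (Suc r mod L) \<in> w ` {..s}"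
      by auto
    then show False
      using r(3) fresh by auto
  qed
  with r show ?thesis
    by blast
qed

lemma leafless_meets_chord:
  assumes "E \<subseteq> {..<L}" and "leafless E" and "E \<noteq> {}"
  shows "E - discovery_steps \<noteq> {}"
  using max_discovery_step_meets_chord[OF assms(1,2)] assms(3) by blast

lemma leafless_single_chord:
  assumes E: "E \<subseteq> {..<L}" "leafless E" and chord: "E - discovery_steps = {e}"
  shows "discovery_edge e \<in> E"
proof -
  have e: "e \<in> E" "e < L"
    using chord E(1) by auto
  have "E \<inter> discovery_steps \<noteq> {}"
    using leafless_shared_endpoint[OF E(2) e(1,2), of "w e"] chord by auto
  define s where "s = Max (E \<inter> discovery_steps)"
  have fin: "finite (E \<inter> discovery_steps)"
    using E(1) finite_subset by blast
  have "s \<in> E \<inter> discovery_steps"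
    unfolding s_def using Max_in[OF fin \<open>E \<inter> discovery_steps \<noteq> {}\<close>] .
  then have fresh: "w (Suc s) \<notin> w ` {..s}"
    unfolding discovery_steps_def by auto
  have visited_early: "first_visit x \<le> Suc s" if x: "x = w e \<or> x = w (Suc e mod L)" for x
  proof -
    obtain r where r: "r \<in> E" "r \<noteq> e" "w r = x \<or> w (Suc r mod L) = x"
      using leafless_shared_endpoint[OF E(2) e(1,2) x] by blast
    then have "r \<in> discovery_steps"
      using chord by blast
    then have "r \<le> s" and "Suc r mod L = Suc r"
      using Max_ge[OF fin] r(1) unfolding s_def discovery_steps_def by auto
    then have "x \<in> w ` {..Suc s}"
      using r(3) by auto
    then obtain t where "t \<le> Suc s" and "w t = x"
      by auto
    then show ?thesis
      using first_visit_le[of t x] by linarith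
  qed
  have "w e = w (Suc s) \<or> w (Suc e mod L) = w (Suc s)"
    using max_discovery_step_meets_chord[OF E \<open>E \<inter> discovery_steps \<noteq> {}\<close>]
    unfolding s_def chord by simp
  then have "first_visit (w e) = Suc s \<or> first_visit (w (Suc e mod L)) = Suc s"
    by (elim disjE) (simp_all add: first_visit_discovered[OF fresh])
  then have "max (first_visit (w e)) (first_visit (w (Suc e mod L))) = Suc s"
    using visited_early[of "w e"] visited_early[of "w (Suc e mod L)"] by (auto simp: max_def)
  then have "discovery_edge e = s"
    unfolding discovery_edge_def by simp
  then show ?thesis
    using \<open>s \<in> E \<inter> discovery_steps\<close> by simp
qed

end

lemma excess_nonneg_if_count:
  assumes "0 < ell" and "num_nlabels L nl = Suc t" and "t + c = L"
    and "ell * t + 2 * num_plabels L pl \<le> (\<Sum>r<L. length (pl r)) + ell * c"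
  shows "excess ell L nl pl \<ge> 0"
proof -
  define D where "D = (\<Sum>r<L. length (pl r))"
  have "real ell * t + 2 * num_plabels L pl \<le> D + real ell * c"
    using assms(4) unfolding D_def by (metis of_nat_add of_nat_le_iff of_nat_mult)
  moreover have "real L = t + c"
    using assms(3) by simp
  then have "excess ell L nl pl = (D + real ell * c - real ell * t - 2 * num_plabels L pl) / (2 * ell)"
    using assms(1,2) unfolding excess_def D_def
    by (simp add: field_simps flip: sum_divide_distrib)
  ultimately show ?thesis
    using assms(1) by simp
qed

locale multi_labelled_cycle =
  fixes p n L1 ell L :: nat and nl :: "nat \<Rightarrow> nat" and pl :: "nat \<Rightarrow> nat list"
  assumes labelling: "multi_labelling p n L1 ell L nl pl"
begin

sublocale loopless_closed_walk L nl
  using labelling unfolding multi_labelling_def by unfold_locales blast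

lemma card_set_labels: "r < L \<Longrightarrow> card (set (pl r)) = length (pl r)"
  using labelling unfolding multi_labelling_def by (simp add: distinct_card)

lemma ell_le_card_set_labels: "r < L \<Longrightarrow> ell \<le> card (set (pl r))"
  using labelling card_set_labels unfolding multi_labelling_def by simp

lemma label_steps_leafless: "leafless {r\<in>{..<L}. j \<in> set (pl r)}"
  unfolding leafless_def
proof
  fix x
  have "degree_in {r\<in>{..<L}. j \<in> set (pl r)} x = edge_count L nl pl x j"
    unfolding degree_in_def edge_count_def
    by (intro arg_cong2[where f = "(+)"] arg_cong[where f = card]) auto
  moreover have "edge_count L nl pl x j = 0 \<or> 2 \<le> edge_count L nl pl x j"
    using labelling unfolding multi_labelling_def by blast
  ultimately show "degree_in {r\<in>{..<L}. j \<in> set (pl r)} x \<noteq> 1"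
    by linarith
qed

lemma card_plabels_bound:
  "ell * card discovery_steps + 2 * num_plabels L pl
     \<le> (\<Sum>r<L. length (pl r)) + ell * card ({..<L} - discovery_steps)"
proof -
  let ?T = discovery_steps and ?C = "{..<L} - discovery_steps"
  have TC: "?T \<union> ?C = {..<L}"
    using discovery_steps_subset by blast
  have "ell * card ?T + 2 * card (\<Union>r\<in>?T \<union> ?C. set (pl r))
      \<le> (\<Sum>r\<in>?T \<union> ?C. card (set (pl r))) + ell * card ?C"
  proof (rule card_labels_bound_by_chords[where \<phi> = discovery_edge])
    show "ell \<le> card (set (pl f))" if "f \<in> ?T" for f
      using that discovery_steps_subset ell_le_card_set_labels by blast
    show "discovery_edge ` ?C \<subseteq> ?T"
      using discovery_edge_in_discovery_steps by auto
    show "\<exists>e\<in>?C. j \<in> set (pl e)" if "j \<in> (\<Union>r\<in>?T \<union> ?C. set (pl r))" for j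
      using leafless_meets_chord[OF _ label_steps_leafless, of j] that TC by blast
    show "j \<in> set (pl (discovery_edge e))" if "{e'\<in>?C. j \<in> set (pl e')} = {e}" for e j
      using leafless_single_chord[OF _ label_steps_leafless, of j e] that by auto
  qed (use discovery_steps_subset finite_subset in auto)
  then show ?thesis
    unfolding num_plabels_def TC using card_set_labels by simp
qed

end

theorem lemma3p8:
  fixes p n L1 ell L :: nat and nl :: "nat \<Rightarrow> nat" and pl :: "nat \<Rightarrow> nat list"
  assumes "1 \<le> ell" and "ell \<le> L1" and "2 \<le> L"
    and "multi_labelling p n L1 ell L nl pl"
  shows "excess ell L nl pl \<ge> 0"
proof -
  interpret multi_labelled_cycle p n L1 ell L nl pl
    using assms(4) by unfold_locales
  have "card discovery_steps + card ({..<L} - discovery_steps) = L"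
    using discovery_steps_subset card_mono[of "{..<L}" discovery_steps]
    by (simp add: card_Diff_subset finite_subset)
  moreover have "num_nlabels L nl = Suc (card discovery_steps)"
    using card_visited assms(3) unfolding num_nlabels_def by simp
  ultimately show ?thesis
    using assms(1) card_plabels_bound by (intro excess_nonneg_if_count) auto
qed

end
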